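(* Let $A$ and $B$ be nontrivial commutative groups. (a) The $\mathbb{Z}[A]$-submodule of $B^A$ generated by $\{\delta_{0,b}: b\in B\}$ is the set of all $f\in B^A$ with $f(a)=0$ for all but finitely many $a\in A$. Hence this set generates $B^A$ as a $\mathbb{Z}[A]$-module if and only if $A$ is finite. (b) If $A$ is finite and $B=\mathbb{Z}/n\mathbb{Z}$ for some $n\ge2$, then the $(\mathbb{Z}/n\mathbb{Z})[A]$-module $B^A$ is free of rank $1$, generated by $\delta_{a,u}$ for any $a\in A$ and any unit $u\in(\mathbb{Z}/n\mathbb{Z})^\times$. (c) If $A$ is finite and $B$ has finite exponent, then for every $a\in A$ and every $b\in B$ of order $\exp(B)$ we have $\delta(A,B)=\operatorname{fdeg}(\delta_{a,b})$.
   Context: For commutative groups $A,B$, $B^A$ denotes the commutative group (under pointwise addition) of all maps $A\to B$. It is a $\mathbb{Z}[A]$-module via $(\sum_a n_a[a])f=\sum_a n_a\tau_a f$, where $(\tau_a f)(x)=f(x+a)$; when $B$ has finite exponent $n$ this is a $(\mathbb{Z}/n\mathbb{Z})[A]$-module. For $a\in A$, $\Delta_a f=\tau_af-f$. Let $\widetilde{\mathbb N}=\mathbb N\cup\{-\infty,\infty\}$, totally ordered with $-\infty$ least and $\infty$ greatest. The functional degree $\operatorname{fdeg}(f)$ of $f\in B^A$ is: $-\infty$ if $f=0$; otherwise the least $n\in\mathbb N$ such that $\Delta_{a_1}\cdots\Delta_{a_{n+1}}f=0$ for all $a_1,\dots,a_{n+1}\in A$; and $\infty$ if no such $n$ exists.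 $\delta(A,B)=\sup\{\operatorname{fdeg}(f): f\in B^A\}$. For $a\in A$, $b\in B$, $\delta_{a,b}\in B^A$ is given by $\delta_{a,b}(a)=b$ and $\delta_{a,b}(x)=0$ for $x\neq a$. *)

theory Defs
  imports "HOL-Library.Extended_Real" "Berlekamp_Zassenhaus.Finite_Field"
begin

definition natmul :: "nat \<Rightarrow> 'b::ab_group_add \<Rightarrow> 'b" where
  "natmul n b = (((+) b) ^^ n) 0"

definition zmul :: "int \<Rightarrow> 'b::ab_group_add \<Rightarrow> 'b" where
  "zmul k b = (if k \<ge> 0 then natmul (nat k) b else - natmul (nat (- k)) b)"

definition tau :: "'a::ab_group_add \<Rightarrow> ('a \<Rightarrow> 'b) \<Rightarrow> 'a \<Rightarrow> 'b" where
  "tau a f = (\<lambda>x. f (x + a))"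

definition Dlt :: "'a::ab_group_add \<Rightarrow> ('a \<Rightarrow> 'b::ab_group_add) \<Rightarrow> 'a \<Rightarrow> 'b" where
  "Dlt a f = (\<lambda>x. tau a f x - f x)"

fun Dlts :: "'a::ab_group_add list \<Rightarrow> ('a \<Rightarrow> 'b::ab_group_add) \<Rightarrow> 'a \<Rightarrow> 'b" where
  "Dlts [] f = f"
| "Dlts (a # as) f = Dlt a (Dlts as f)"

(* functional degree, with \<nat> \<union> {-\<infinity>,\<infinity>} embedded order-preservingly in ereal *)
definition fdeg :: "('a::ab_group_add \<Rightarrow> 'b::ab_group_add) \<Rightarrow> ereal" where
  "fdeg f = (if f = (\<lambda>_. 0) then - \<infinity>
     else if (\<exists>n. \<forall>as. length as = Suc n \<longrightarrow> Dlts as f = (\<lambda>_. 0))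
       then ereal (real (LEAST n. \<forall>as. length as = Suc n \<longrightarrow> Dlts as f = (\<lambda>_. 0)))
     else \<infinity>)"

definition fdelta :: "'a::ab_group_add itself \<Rightarrow> 'b::ab_group_add itself \<Rightarrow> ereal" where
  "fdelta _ _ = (SUP f \<in> (UNIV :: ('a \<Rightarrow> 'b) set). fdeg f)"

definition dfun :: "'a \<Rightarrow> 'b::zero \<Rightarrow> 'a \<Rightarrow> 'b" where
  "dfun a b = (\<lambda>x. if x = a then b else 0)"

definition groupring :: "('a \<Rightarrow> 'r::zero) set" where
  "groupring = {r. finite {a. r a \<noteq> 0}}"

definition zact :: "('a::ab_group_add \<Rightarrow> int) \<Rightarrow> ('a \<Rightarrow> 'b::ab_group_add) \<Rightarrow> 'a \<Rightarrow> 'b" where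
  "zact r f = (\<lambda>x. \<Sum>a\<in>{a. r a \<noteq> 0}. zmul (r a) (tau a f x))"

definition ract :: "('a::ab_group_add \<Rightarrow> 'r::comm_ring_1) \<Rightarrow> ('a \<Rightarrow> 'r) \<Rightarrow> 'a \<Rightarrow> 'r" where
  "ract r f = (\<lambda>x. \<Sum>a\<in>{a. r a \<noteq> 0}. r a * tau a f x)"

inductive_set zspan :: "('a::ab_group_add \<Rightarrow> 'b::ab_group_add) set \<Rightarrow> ('a \<Rightarrow> 'b) set"
  for S where
  zero: "(\<lambda>_. 0) \<in> zspan S"
| gen: "s \<in> S \<Longrightarrow> s \<in> zspan S"
| add: "f \<in> zspan S \<Longrightarrow> g \<in> zspan S \<Longrightarrow> (\<lambda>x. f x + g x) \<in> zspan S"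
| smult: "r \<in> groupring \<Longrightarrow> f \<in> zspan S \<Longrightarrow> zact r f \<in> zspan S"

definition addord :: "'b::ab_group_add \<Rightarrow> nat" where
  "addord b = (LEAST k. k > 0 \<and> natmul k b = 0)"

definition expo :: "'b::ab_group_add itself \<Rightarrow> nat" where
  "expo _ = (LEAST n. n > 0 \<and> (\<forall>b::'b. natmul n b = 0))"

end

theory Submission
  imports Defs
begin

(*
  (a) Translating delta_{0,b} by -c gives delta_{c,b}, so the span contains all finite sums of
  such maps, i.e. all finitely supported maps; conversely the module operations preserve finite
  support.
  (b) For finite A, r * delta_{a,u} is x |-> r (a - x) u, which is bijective in r when u is a unit.
  (c) Difference operators commute with translations and with integer multiples, so
  Delta_{a1} ... Delta_{ak} delta_{c,v} is v times a translate of the integer-valued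
  Delta_{a1} ... Delta_{ak} delta_{0,1}. If b has order exp(B), every integer killing b kills all
  of B. Hence whenever an iterated difference of delta_{a,b} vanishes, so does that of every
  delta_{c,v}, and by additivity that of every f; thus fdeg f <= fdeg delta_{a,b}.
*)

lemma natmul_0 [simp]: "natmul 0 b = 0"
  by (simp add: natmul_def)

lemma natmul_Suc [simp]: "natmul (Suc n) b = b + natmul n b"
  by (simp add: natmul_def)

lemma natmul_add: "natmul (m + n) b = natmul m b + natmul n b"
  by (induction m) (simp_all add: add.assoc)

lemma natmul_zero_right [simp]: "natmul n 0 = 0"
  by (induction n) simp_all

lemma natmul_mult_eq_0: "natmul d b = 0 \<Longrightarrow> natmul (q * d) b = 0"
  by (induction q) (simp_all add: natmul_add)

lemma zmul_diff_nat: "zmul (int m - int n) b = natmul m b - natmul n b"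
proof (cases "n \<le> m")
  case True
  then obtain k where "m = n + k"
    using le_Suc_ex by blast
  then show ?thesis
    by (simp add: zmul_def natmul_add)
next
  case False
  then obtain k where "n = m + k"
    using le_Suc_ex nat_le_linear by blast
  then show ?thesis
    by (auto simp: zmul_def natmul_add)
qed

lemma zmul_eq_natmul_diff: "zmul k b = natmul (nat k) b - natmul (nat (- k)) b"
  by (simp add: zmul_def)

lemma zmul_add: "zmul (k + l) b = zmul k b + zmul l b"
proof -
  have "k + l = int (nat k + nat l) - int (nat (- k) + nat (- l))"
    by simp
  then have "zmul (k + l) b = natmul (nat k + nat l) b - natmul (nat (- k) + nat (- l)) b"
    by (metis zmul_diff_nat)
  then show ?thesis
    by (simp add: zmul_eq_natmul_diff natmul_add algebra_simps)
qed

lemma zmul_diff: "zmul (k - l) b = zmul k b - zmul l b"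
  using zmul_add [of "k - l" l b] by (simp add: algebra_simps)

lemma zmul_0 [simp]: "zmul 0 b = 0"
  by (simp add: zmul_def)

lemma zmul_1 [simp]: "zmul 1 b = b"
  by (simp add: zmul_def)

lemma zmul_zero_right [simp]: "zmul k 0 = 0"
  by (simp add: zmul_def)

lemma zmul_eq_0_iff: "zmul k b = 0 \<longleftrightarrow> natmul (nat \<bar>k\<bar>) b = 0"
  by (simp add: zmul_def)

lemma tau_dfun: "tau d (dfun a v) = dfun (a - d) v"
  by (auto simp: tau_def dfun_def algebra_simps)

lemma zact_dfun_one: "zact (dfun c 1) f = tau c f"
proof -
  have "{a. dfun c (1::int) a \<noteq> 0} = {c}"
    by (auto simp: dfun_def)
  then show ?thesis
    by (simp add: zact_def dfun_def zmul_def)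
qed

lemma finite_support_zact:
  assumes "r \<in> groupring" and "finite {x. f x \<noteq> 0}"
  shows "finite {x. zact r f x \<noteq> 0}"
proof -
  have "{x. zact r f x \<noteq> 0} \<subseteq> (\<Union>a\<in>{a. r a \<noteq> 0}. (\<lambda>y. y - a) ` {y. f y \<noteq> 0})"
  proof
    fix x
    assume "x \<in> {x. zact r f x \<noteq> 0}"
    then obtain a where "r a \<noteq> 0" and "zmul (r a) (tau a f x) \<noteq> 0"
      unfolding zact_def by (auto dest: sum.not_neutral_contains_not_neutral)
    then show "x \<in> (\<Union>a\<in>{a. r a \<noteq> 0}. (\<lambda>y. y - a) ` {y. f y \<noteq> 0})"
      by (auto simp: tau_def intro!: bexI [of _ a] image_eqI [of _ _ "x + a"])
  qed
  moreover have "finite (\<Union>a\<in>{a. r a \<noteq> 0}. (\<lambda>y. y - a) ` {y. f y \<noteq> 0})"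
    using assms by (simp add: groupring_def)
  ultimately show ?thesis
    by (rule finite_subset)
qed

lemma finite_support_zspan:
  assumes "\<And>s. s \<in> S \<Longrightarrow> finite {x. s x \<noteq> 0}" and "f \<in> zspan S"
  shows "finite {x. f x \<noteq> 0}"
  using assms(2)
proof induction
  case zero
  show ?case by simp
next
  case (gen s)
  then show ?case by (rule assms(1))
next
  case (add f g)
  have "{x. f x + g x \<noteq> 0} \<subseteq> {x. f x \<noteq> 0} \<union> {x. g x \<noteq> 0}"
    by auto
  with add.IH show ?case
    by (blast intro: finite_subset)
next
  case (smult r f)
  with finite_support_zact show ?case by blast
qed

lemma zspan_sum:
  assumes "finite F" and "\<And>c. c \<in> F \<Longrightarrow> g c \<in> zspan S"
  shows "(\<lambda>x. \<Sum>c\<in>F. g c x) \<in> zspan S"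
  using assms
proof (induction F rule: finite_induct)
  case empty
  show ?case by (simp add: zspan.zero)
next
  case (insert c F)
  have "(\<lambda>x. g c x + (\<Sum>c\<in>F. g c x)) \<in> zspan S"
    using insert by (intro zspan.add) simp_all
  with insert.hyps show ?case
    by simp
qed

lemma sum_dfun_support:
  assumes "finite {a. f a \<noteq> 0}"
  shows "(\<lambda>x. \<Sum>c\<in>{a. f a \<noteq> 0}. dfun c (f c) x) = f"
  using assms by (auto simp: dfun_def sum.delta')

lemma dfun_in_zspan_dfun_zero: "dfun c v \<in> zspan {dfun 0 b | b. True}"
proof -
  have "dfun 0 v \<in> zspan {dfun 0 b | b. True}"
    by (rule zspan.gen) blast
  then have "zact (dfun (- c) 1) (dfun 0 v) \<in> zspan {dfun 0 b | b. True}"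
    by (rule zspan.smult [rotated]) (simp add: groupring_def dfun_def)
  then show ?thesis
    by (simp add: zact_dfun_one tau_dfun)
qed

theorem zspan_dfun_zero:
  "zspan {dfun (0::'a::ab_group_add) b | b :: 'b::ab_group_add. True} = {f. finite {a. f a \<noteq> 0}}"
proof (intro equalityI subsetI)
  fix f :: "'a \<Rightarrow> 'b"
  assume "f \<in> zspan {dfun 0 b | b. True}"
  then show "f \<in> {f. finite {a. f a \<noteq> 0}}"
    by (auto intro: finite_support_zspan [where S = "{dfun 0 b | b. True}"]
        finite_subset [of _ "{0}"] simp: dfun_def)
next
  fix f :: "'a \<Rightarrow> 'b"
  assume "f \<in> {f. finite {a. f a \<noteq> 0}}"
  then have "(\<lambda>x. \<Sum>c\<in>{a. f a \<noteq> 0}. dfun c (f c) x) \<in> zspan {dfun 0 b | b. True}"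
    by (intro zspan_sum dfun_in_zspan_dfun_zero) simp
  with \<open>f \<in> {f. finite {a. f a \<noteq> 0}}\<close> show "f \<in> zspan {dfun 0 b | b. True}"
    by (simp add: sum_dfun_support)
qed

lemma finite_support_eq_UNIV_iff:
  assumes "(b::'b::zero) \<noteq> 0"
  shows "{f :: 'a \<Rightarrow> 'b. finite {a. f a \<noteq> 0}} = UNIV \<longleftrightarrow> finite (UNIV :: 'a set)"
proof
  assume "{f :: 'a \<Rightarrow> 'b. finite {a. f a \<noteq> 0}} = UNIV"
  then have "(\<lambda>_. b) \<in> {f :: 'a \<Rightarrow> 'b. finite {a. f a \<noteq> 0}}"
    by (simp only: UNIV_I)
  with assms show "finite (UNIV :: 'a set)"
    by simp
qed (auto intro: finite_subset)

lemma groupring_eq_UNIV: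
  "finite (UNIV :: 'a set) \<Longrightarrow> groupring = (UNIV :: ('a \<Rightarrow> 'r::zero) set)"
  by (auto simp: groupring_def intro: finite_subset)

lemma ract_dfun:
  fixes r :: "'a::ab_group_add \<Rightarrow> 'r::comm_ring_1"
  assumes "finite (UNIV :: 'a set)"
  shows "ract r (dfun a u) = (\<lambda>x. r (a - x) * u)"
proof
  fix x
  have "ract r (dfun a u) x = (\<Sum>c\<in>{c. r c \<noteq> 0}. if c = a - x then r c * u else 0)"
    unfolding ract_def dfun_def tau_def by (rule sum.cong) (auto simp: algebra_simps)
  also have "\<dots> = r (a - x) * u"
    using assms by (subst sum.delta) (auto intro: finite_subset)
  finally show "ract r (dfun a u) x = r (a - x) * u" .
qed

theorem bij_betw_ract_dfun_unit:
  fixes u :: "'r::comm_ring_1" and a :: "'a::ab_group_add"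
  assumes "finite (UNIV :: 'a set)" and "u dvd 1"
  shows "bij_betw (\<lambda>r. ract r (dfun a u)) groupring UNIV"
proof -
  from \<open>u dvd 1\<close> obtain v where uv: "u * v = 1"
    by (metis dvdE)
  show ?thesis
    unfolding groupring_eq_UNIV [OF assms(1)] ract_dfun [OF assms(1)]
    by (rule bij_betw_byWitness [where f' = "\<lambda>g y. g (a - y) * v"])
      (auto simp: mult.assoc uv mult.commute [of v u])
qed

lemma addord_spec:
  assumes "0 < k" and "natmul k b = 0"
  shows "0 < addord b" and "natmul (addord b) b = 0"
  using LeastI [of "\<lambda>k. 0 < k \<and> natmul k b = 0", OF conjI [OF assms]]
  by (simp_all add: addord_def)

lemma addord_dvd:
  assumes "0 < k" and "natmul k b = 0" and "natmul m b = 0"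
  shows "addord b dvd m"
proof -
  define d where "d = addord b"
  have d: "0 < d" "natmul d b = 0"
    using addord_spec [OF assms(1,2)] by (simp_all add: d_def)
  have "natmul m b = natmul ((m div d) * d) b + natmul (m mod d) b"
    by (simp add: natmul_add [symmetric])
  then have "natmul (m mod d) b = 0"
    using assms(3) natmul_mult_eq_0 [OF d(2)] by simp
  have "m mod d = 0"
  proof (rule ccontr)
    assume "m mod d \<noteq> 0"
    with \<open>natmul (m mod d) b = 0\<close> have "d \<le> m mod d"
      unfolding d_def addord_def by (simp add: Least_le)
    with mod_less_divisor [OF d(1), of m] show False
      by simp
  qed
  then show ?thesis
    by (simp add: d_def mod_eq_0_iff_dvd)
qed

lemma expo_spec:
  assumes "\<exists>n>0. \<forall>b::'b::ab_group_add. natmul n b = 0"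
  shows "0 < expo TYPE('b)" and "natmul (expo TYPE('b)) (b::'b) = 0"
  using LeastI_ex [of "\<lambda>n. 0 < n \<and> (\<forall>b::'b. natmul n b = 0)", OF assms]
  by (simp_all add: expo_def)

lemma zmul_eq_0_of_addord_eq_expo:
  fixes b c :: "'b::ab_group_add"
  assumes "\<exists>n>0. \<forall>b::'b. natmul n b = 0" and "addord b = expo TYPE('b)" and "zmul k b = 0"
  shows "zmul k c = 0"
proof -
  have "expo TYPE('b) dvd nat \<bar>k\<bar>"
    using addord_dvd [of "expo TYPE('b)" b "nat \<bar>k\<bar>"] assms expo_spec [OF assms(1)]
    by (simp add: zmul_eq_0_iff)
  then obtain q where "nat \<bar>k\<bar> = q * expo TYPE('b)"
    by (metis dvdE mult.commute)
  then show ?thesis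
    using natmul_mult_eq_0 [OF expo_spec(2) [OF assms(1)]] by (simp add: zmul_eq_0_iff)
qed

lemma Dlts_zmul: "Dlts as (\<lambda>x. zmul (h x) v) = (\<lambda>x. zmul (Dlts as h x) v)"
  by (induction as) (simp_all add: Dlt_def tau_def zmul_diff)

lemma Dlts_tau: "Dlts as (tau d f) = tau d (Dlts as f)"
  by (induction as) (simp_all add: Dlt_def tau_def add.commute add.left_commute)

lemma Dlts_sum: "Dlts as (\<lambda>x. \<Sum>c\<in>I. F c x) = (\<lambda>x. \<Sum>c\<in>I. Dlts as (F c) x)"
  by (induction as) (simp_all add: Dlt_def tau_def sum_subtractf)

lemma Dlts_dfun: "Dlts as (dfun c v) = (\<lambda>x. zmul (Dlts as (dfun 0 (1::int)) (x - c)) v)"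
proof -
  have "dfun c v = tau (- c) (\<lambda>x. zmul (dfun 0 (1::int) x) v)"
    by (simp add: dfun_def tau_def fun_eq_iff)
  then have "Dlts as (dfun c v) = tau (- c) (\<lambda>x. zmul (Dlts as (dfun 0 (1::int)) x) v)"
    by (simp only: Dlts_tau Dlts_zmul)
  then show ?thesis
    by (simp add: tau_def)
qed

lemma Dlts_eq_sum_Dlts_dfun:
  assumes "finite (UNIV :: 'a set)"
  shows "Dlts as f = (\<lambda>x. \<Sum>c\<in>(UNIV :: 'a::ab_group_add set). Dlts as (dfun c (f c)) x)"
proof -
  have "(\<lambda>x. \<Sum>c\<in>UNIV. dfun c (f c) x) = f"
    using assms by (simp add: dfun_def sum.delta')
  then show ?thesis
    using Dlts_sum [of as "\<lambda>c. dfun c (f c)" UNIV] by simp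
qed

lemma fdeg_mono:
  fixes f g :: "'a::ab_group_add \<Rightarrow> 'b::ab_group_add"
  assumes "\<And>as. Dlts as g = (\<lambda>_. 0) \<Longrightarrow> Dlts as f = (\<lambda>_. 0)"
  shows "fdeg f \<le> fdeg g"
proof -
  define P where "P h n \<longleftrightarrow> (\<forall>as. length as = Suc n \<longrightarrow> Dlts as h = (\<lambda>_. 0 :: 'b))"
    for h :: "'a \<Rightarrow> 'b" and n
  have fdeg_eq: "fdeg h = (if h = (\<lambda>_. 0) then - \<infinity>
      else if \<exists>n. P h n then ereal (real (Least (P h))) else \<infinity>)" for h
    unfolding fdeg_def P_def by (rule refl)
  show ?thesis
  proof (cases "f = (\<lambda>_. 0)")
    case True
    then show ?thesis
      by (simp add: fdeg_eq)
  next
    case f_nonzero: False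
    have g_nonzero: "g \<noteq> (\<lambda>_. 0)"
      using f_nonzero assms [of "[]"] by auto
    show ?thesis
    proof (cases "\<exists>n. P g n")
      case False
      with g_nonzero have "fdeg g = \<infinity>"
        by (simp add: fdeg_eq [of g])
      then show ?thesis
        by simp
    next
      case True
      then have "P g (Least (P g))"
        by (rule LeastI_ex)
      then have "P f (Least (P g))"
        using assms by (simp add: P_def)
      then have "\<exists>n. P f n" and "Least (P f) \<le> Least (P g)"
        by (auto intro: Least_le)
      with True f_nonzero g_nonzero show ?thesis
        by (simp add: fdeg_eq [of f] fdeg_eq [of g])
    qed
  qed
qed

lemma Dlts_eq_0_of_Dlts_dfun_eq_0:
  fixes b :: "'b::ab_group_add" and f :: "'a::ab_group_add \<Rightarrow> 'b"
  assumes "finite (UNIV :: 'a set)" and "\<exists>n>0. \<forall>b::'b. natmul n b = 0"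
    and "addord b = expo TYPE('b)" and "Dlts as (dfun a b) = (\<lambda>_. 0)"
  shows "Dlts as f = (\<lambda>_. 0)"
proof -
  have "zmul (Dlts as (dfun 0 (1::int)) y) b = 0" for y
  proof -
    have "Dlts as (dfun a b) (y + a) = 0"
      using assms(4) by simp
    then show ?thesis
      by (simp add: Dlts_dfun [of as a b])
  qed
  then have "Dlts as (dfun c v) = (\<lambda>_. 0)" for c and v :: 'b
    unfolding Dlts_dfun [of as c v] using zmul_eq_0_of_addord_eq_expo [OF assms(2,3)] by simp
  then show ?thesis
    by (simp add: Dlts_eq_sum_Dlts_dfun [OF assms(1), of as f])
qed

theorem fdelta_eq_fdeg_dfun:
  fixes b :: "'b::ab_group_add" and a :: "'a::ab_group_add"
  assumes "finite (UNIV :: 'a set)" and "\<exists>n>0. \<forall>b::'b. natmul n b = 0"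
    and "addord b = expo TYPE('b)"
  shows "fdelta TYPE('a) TYPE('b) = fdeg (dfun a b)"
  unfolding fdelta_def
proof (rule antisym)
  show "(SUP f\<in>(UNIV :: ('a \<Rightarrow> 'b) set). fdeg f) \<le> fdeg (dfun a b)"
  proof (rule SUP_least)
    fix f :: "'a \<Rightarrow> 'b"
    have "Dlts as f = (\<lambda>_. 0)" if "Dlts as (dfun a b) = (\<lambda>_. 0)" for as
      using assms that by (rule Dlts_eq_0_of_Dlts_dfun_eq_0)
    then show "fdeg f \<le> fdeg (dfun a b)"
      by (rule fdeg_mono)
  qed
  show "fdeg (dfun a b) \<le> (SUP f\<in>(UNIV :: ('a \<Rightarrow> 'b) set). fdeg f)"
    by (rule SUP_upper) simp
qed

theorem mainTheorem7:
  fixes A_nontriv :: "'a::ab_group_add" and B_nontriv :: "'b::ab_group_add"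
  assumes "A_nontriv \<noteq> 0" and "B_nontriv \<noteq> 0"
  shows
    "zspan {dfun (0::'a) b | b::'b. True} = {f. finite {a. f a \<noteq> 0}}
     \<and> (zspan {dfun (0::'a) b | b::'b. True} = UNIV \<longleftrightarrow> finite (UNIV :: 'a set))
     \<and> (finite (UNIV :: 'a set) \<longrightarrow>
          (\<forall>(a::'a) (u::'n::nontriv mod_ring). u dvd 1 \<longrightarrow>
             bij_betw (\<lambda>r. ract r (dfun a u)) groupring UNIV))
     \<and> (finite (UNIV :: 'a set) \<longrightarrow> (\<exists>n>0. \<forall>b::'b. natmul n b = 0) \<longrightarrow>
          (\<forall>(a::'a) (b::'b). addord b = expo TYPE('b) \<longrightarrow>
             fdelta TYPE('a) TYPE('b) = fdeg (dfun a b)))"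
proof (intro conjI impI allI)
  show "zspan {dfun (0::'a) b | b::'b. True} = {f :: 'a \<Rightarrow> 'b. finite {a. f a \<noteq> 0}}"
    by (rule zspan_dfun_zero)
  then show "zspan {dfun (0::'a) b | b::'b. True} = UNIV \<longleftrightarrow> finite (UNIV :: 'a set)"
    using finite_support_eq_UNIV_iff [OF assms(2)] by simp
qed (simp_all add: bij_betw_ract_dfun_unit fdelta_eq_fdeg_dfun)

end
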